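(* Let $(\mathcal D,T)$ be a finite basic quasi-schemoid, $(\mathcal C,S)$ a finite quasi-schemoid whose underlying category is a groupoid, and $\phi:(\mathcal C,S)\to(\mathcal D,T)$ an admissible morphism. Then the $\mathbb K$-linear map $\mathbb K(\phi):\mathbb K(\mathcal C,S)\to\mathbb K(\mathcal D,T)$ defined by $\mathbb K(\phi)(s_\pi)=n^\phi_\pi\, s_{\phi(\pi)}$ for $\pi\in S$ is an algebra homomorphism.
   Context: Write $s(f),t(f)$ for source and target. A quasi-schemoid is a pair $(\mathcal C,S)$ with $\mathcal C$ a small category and $S$ a partition of $mor(\mathcal C)$ into nonempty blocks such that for all $\sigma,\tau,\mu\in S$ and $f,g\in\mu$ the sets $\{(a,b)\in\sigma\times\tau: s(a)=t(b), a\circ b=f\}$ and the analogous set for $g$ have equal cardinality, denoted $p^\mu_{\sigma\tau}$. It is finite if $mor(\mathcal C)$ is finite; unital if every block meeting $\{1_x\}$ is contained in it; basic if unital and $\mathcal C$ is a groupoid. $\mathbb K$ is a commutative ring with unit. The category algebra $\mathbb K\mathcal C$ is the free $\mathbb K$-module on $mor(\mathcal C)$ with product $a\cdot b=a\circ b$ if $s(a)=t(b)$ and $0$ otherwise; $s_\sigma=\sum_{f\in\sigma}f$, and the schemoid algebra $\mathbb K(\mathcal C,S)$ is the subalgebra of $\mathbb K\mathcal C$ spanned (freely) by the $s_\sigma$, $\sigma\in S$. A morphism of quasi-schemoids $\phi$ is a functor such that each $\phi(\sigma)$ lies in a unique block of the target, also denoted $\phi(\sigma)$; it is admissible if for every $x\in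 ob(\mathcal C)$, $\sigma\in S$ and $g\in\phi(\sigma)$ with $t(g)=\phi(x)$ there exists $f\in\sigma$ with $t(f)=x$ and $\phi(f)=g$. Under the hypotheses, for each $\sigma\in S$ there is a positive integer $n^\phi_\sigma$ with $\#(\phi^{-1}(g)\cap\{f\in\sigma:t(f)=x\})=n^\phi_\sigma$ for all $x$ and all $g\in\phi(\sigma)$ with $t(g)=\phi(x)$. *)

theory Defs
  imports Main
begin

record ('o, 'a) cat =
  Ob :: "'o set"
  Mor :: "'a set"
  src :: "'a \<Rightarrow> 'o"
  tgt :: "'a \<Rightarrow> 'o"
  comp :: "'a \<Rightarrow> 'a \<Rightarrow> 'a"
  ident :: "'o \<Rightarrow> 'a"

definition category :: "('o, 'a) cat \<Rightarrow> bool" where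
  "category C \<longleftrightarrow>
     (\<forall>f\<in>Mor C. src C f \<in> Ob C \<and> tgt C f \<in> Ob C) \<and>
     (\<forall>x\<in>Ob C. ident C x \<in> Mor C \<and> src C (ident C x) = x \<and> tgt C (ident C x) = x) \<and>
     (\<forall>f\<in>Mor C. \<forall>g\<in>Mor C. src C f = tgt C g \<longrightarrow>
        comp C f g \<in> Mor C \<and> src C (comp C f g) = src C g \<and> tgt C (comp C f g) = tgt C f) \<and>
     (\<forall>f\<in>Mor C. \<forall>g\<in>Mor C. \<forall>h\<in>Mor C. src C f = tgt C g \<longrightarrow> src C g = tgt C h \<longrightarrow>
        comp C (comp C f g) h = comp C f (comp C g h)) \<and>
     (\<forall>f\<in>Mor C. comp C (ident C (tgt C f)) f = f \<and> comp C f (ident C (src C f)) = f)"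

definition groupoid :: "('o, 'a) cat \<Rightarrow> bool" where
  "groupoid C \<longleftrightarrow> category C \<and>
     (\<forall>f\<in>Mor C. \<exists>g\<in>Mor C. src C g = tgt C f \<and> tgt C g = src C f \<and>
        comp C g f = ident C (src C f) \<and> comp C f g = ident C (tgt C f))"

definition factorizations :: "('o, 'a) cat \<Rightarrow> 'a set \<Rightarrow> 'a set \<Rightarrow> 'a \<Rightarrow> ('a \<times> 'a) set" where
  "factorizations C \<sigma> \<tau> f = {(a, b). a \<in> \<sigma> \<and> b \<in> \<tau> \<and> src C a = tgt C b \<and> comp C a b = f}"

definition quasi_schemoid :: "('o, 'a) cat \<Rightarrow> 'a set set \<Rightarrow> bool" where
  "quasi_schemoid C S \<longleftrightarrow> category C \<and>
     (\<forall>\<sigma>\<in>S. \<sigma> \<noteq> {} \<and> \<sigma> \<subseteq> Mor C) \<and> \<Union>S = Mor C \<and>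
     (\<forall>\<sigma>\<in>S. \<forall>\<tau>\<in>S. \<sigma> \<noteq> \<tau> \<longrightarrow> \<sigma> \<inter> \<tau> = {}) \<and>
     (\<forall>\<sigma>\<in>S. \<forall>\<tau>\<in>S. \<forall>\<mu>\<in>S. \<forall>f\<in>\<mu>. \<forall>g\<in>\<mu>.
        card (factorizations C \<sigma> \<tau> f) = card (factorizations C \<sigma> \<tau> g))"

definition finite_qs :: "('o, 'a) cat \<Rightarrow> 'a set set \<Rightarrow> bool" where
  "finite_qs C S \<longleftrightarrow> quasi_schemoid C S \<and> finite (Mor C)"

definition unital_qs :: "('o, 'a) cat \<Rightarrow> 'a set set \<Rightarrow> bool" where
  "unital_qs C S \<longleftrightarrow> quasi_schemoid C S \<and>
     (\<forall>\<sigma>\<in>S. \<sigma> \<inter> ident C ` Ob C \<noteq> {} \<longrightarrow> \<sigma> \<subseteq> ident C ` Ob C)"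

definition basic_qs :: "('o, 'a) cat \<Rightarrow> 'a set set \<Rightarrow> bool" where
  "basic_qs C S \<longleftrightarrow> unital_qs C S \<and> groupoid C"

definition qs_morphism ::
  "('o, 'a) cat \<Rightarrow> 'a set set \<Rightarrow> ('p, 'b) cat \<Rightarrow> 'b set set \<Rightarrow> ('o \<Rightarrow> 'p) \<Rightarrow> ('a \<Rightarrow> 'b) \<Rightarrow> bool" where
  "qs_morphism C S D T po pm \<longleftrightarrow> quasi_schemoid C S \<and> quasi_schemoid D T \<and>
     (\<forall>x\<in>Ob C. po x \<in> Ob D) \<and>
     (\<forall>f\<in>Mor C. pm f \<in> Mor D \<and> src D (pm f) = po (src C f) \<and> tgt D (pm f) = po (tgt C f)) \<and>
     (\<forall>f\<in>Mor C. \<forall>g\<in>Mor C. src C f = tgt C g \<longrightarrow> pm (comp C f g) = comp D (pm f) (pm g)) \<and>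
     (\<forall>x\<in>Ob C. pm (ident C x) = ident D (po x)) \<and>
     (\<forall>\<sigma>\<in>S. \<exists>\<tau>\<in>T. pm ` \<sigma> \<subseteq> \<tau>)"

definition img_block :: "'b set set \<Rightarrow> ('a \<Rightarrow> 'b) \<Rightarrow> 'a set \<Rightarrow> 'b set" where
  "img_block T pm \<sigma> = (THE \<tau>. \<tau> \<in> T \<and> pm ` \<sigma> \<subseteq> \<tau>)"

definition admissible ::
  "('o, 'a) cat \<Rightarrow> 'a set set \<Rightarrow> ('p, 'b) cat \<Rightarrow> 'b set set \<Rightarrow> ('o \<Rightarrow> 'p) \<Rightarrow> ('a \<Rightarrow> 'b) \<Rightarrow> bool" where
  "admissible C S D T po pm \<longleftrightarrow> qs_morphism C S D T po pm \<and>
     (\<forall>x\<in>Ob C. \<forall>\<sigma>\<in>S. \<forall>g\<in>img_block T pm \<sigma>. tgt D g = po x \<longrightarrow>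
        (\<exists>f\<in>\<sigma>. tgt C f = x \<and> pm f = g))"

text \<open>n^phi_sigma: the common cardinality, evaluated at x = t(f0), g = phi(f0) for a chosen f0 in sigma.\<close>
definition nphi :: "('o, 'a) cat \<Rightarrow> ('a \<Rightarrow> 'b) \<Rightarrow> 'a set \<Rightarrow> nat" where
  "nphi C pm \<sigma> = (let f0 = (SOME f. f \<in> \<sigma>) in
     card {f \<in> \<sigma>. tgt C f = tgt C f0 \<and> pm f = pm f0})"

text \<open>Category algebra KC: elements are functions mor(C) -> K (zero outside Mor C);
  the product is the convolution given by composition.\<close>
definition cat_mult :: "('o, 'a) cat \<Rightarrow> ('a \<Rightarrow> 'k::comm_ring_1) \<Rightarrow> ('a \<Rightarrow> 'k) \<Rightarrow> ('a \<Rightarrow> 'k)" where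
  "cat_mult C u v = (\<lambda>h. \<Sum>(a, b) \<in> factorizations C (Mor C) (Mor C) h. u a * v b)"

definition sblock :: "'a set \<Rightarrow> 'a \<Rightarrow> 'k::comm_ring_1" where
  "sblock \<sigma> = (\<lambda>f. if f \<in> \<sigma> then 1 else 0)"

definition schemoid_alg :: "'a set set \<Rightarrow> ('a \<Rightarrow> 'k::comm_ring_1) set" where
  "schemoid_alg S = {u. \<exists>c. u = (\<lambda>h. \<Sum>\<sigma>\<in>S. c \<sigma> * sblock \<sigma> h)}"

text \<open>K(phi): the K-linear map with s_pi |-> n^phi_pi s_phi(pi). An element of K(C,S) is
  constant on each block, its coefficient at s_pi being its value at any element of pi.\<close>
definition Kphi ::
  "('o, 'a) cat \<Rightarrow> 'a set set \<Rightarrow> 'b set set \<Rightarrow> ('a \<Rightarrow> 'b) \<Rightarrow> ('a \<Rightarrow> 'k::comm_ring_1) \<Rightarrow> ('b \<Rightarrow> 'k)" where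
  "Kphi C S T pm u = (\<lambda>h. \<Sum>\<pi>\<in>S. u (SOME f. f \<in> \<pi>) * of_nat (nphi C pm \<pi>) * sblock (img_block T pm \<pi>) h)"

end

theory Submission
  imports Defs
begin

text \<open>
  Elements of the schemoid algebra are the functions on the morphisms that are constant on
  blocks. For such u, K(\<phi>)(u) at g with t(g) = \<phi>(x) is the sum of u over the morphisms f
  with t(f) = x and \<phi>(f) = g: inside a block \<pi> there are n^\<phi>_\<pi> of them, since in a
  groupoid they correspond to the factorizations of one member of \<pi> through ker \<phi>, which is
  a union of blocks because the target is unital. With this fibre-sum description, both
  K(\<phi>)(uv) and K(\<phi>)(u) K(\<phi>)(v) at such g equal the sum of u(a) v(b) over the composable
  pairs with t(a) = x and \<phi>(a b) = g. Both sides are constant on the blocks of T, and both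
  vanish on a block none of whose members has its target in the image of \<phi>; for the product
  this uses that in a groupoid the structure constants transport targets between blocks.
\<close>

context
  fixes C :: "('o, 'a) cat"
  assumes category: "category C"
begin

lemma category_src_mem: "f \<in> Mor C \<Longrightarrow> src C f \<in> Ob C"
  using category unfolding category_def by blast

lemma category_tgt_mem: "f \<in> Mor C \<Longrightarrow> tgt C f \<in> Ob C"
  using category unfolding category_def by blast

lemma category_ident_mem: "x \<in> Ob C \<Longrightarrow> ident C x \<in> Mor C"
  using category unfolding category_def by blast

lemma category_tgt_ident: "x \<in> Ob C \<Longrightarrow> tgt C (ident C x) = x"
  using category unfolding category_def by blast

lemma category_comp_mem: "f \<in> Mor C \<Longrightarrow> g \<in> Mor C \<Longrightarrow> src C f = tgt C g \<Longrightarrow> comp C f g \<in> Mor C"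
  using category unfolding category_def by blast

lemma category_tgt_comp:
  "f \<in> Mor C \<Longrightarrow> g \<in> Mor C \<Longrightarrow> src C f = tgt C g \<Longrightarrow> tgt C (comp C f g) = tgt C f"
  using category unfolding category_def by blast

lemma category_comp_assoc:
  "f \<in> Mor C \<Longrightarrow> g \<in> Mor C \<Longrightarrow> h \<in> Mor C \<Longrightarrow> src C f = tgt C g \<Longrightarrow> src C g = tgt C h \<Longrightarrow>
    comp C (comp C f g) h = comp C f (comp C g h)"
  using category unfolding category_def by blast

lemma category_comp_ident_left: "f \<in> Mor C \<Longrightarrow> comp C (ident C (tgt C f)) f = f"
  using category unfolding category_def by blast

lemma category_comp_ident_right: "f \<in> Mor C \<Longrightarrow> comp C f (ident C (src C f)) = f"
  using category unfolding category_def by blast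

end

lemma groupoid_category: "groupoid C \<Longrightarrow> category C"
  unfolding groupoid_def by blast

lemma groupoid_factor_through:
  assumes groupoid: "groupoid C" and a: "a \<in> Mor C" and f: "f \<in> Mor C" and "tgt C a = tgt C f"
  obtains k where "k \<in> Mor C" "tgt C k = src C a" "comp C a k = f"
proof -
  have cat: "category C" using groupoid by (rule groupoid_category)
  obtain a' where a': "a' \<in> Mor C" "src C a' = tgt C a" "tgt C a' = src C a"
      "comp C a a' = ident C (tgt C a)"
    using groupoid a unfolding groupoid_def by blast
  have composable: "src C a' = tgt C f" using a' assms(4) by simp
  show thesis
  proof
    show "comp C a' f \<in> Mor C" using category_comp_mem[OF cat a'(1) f composable] .
    show "tgt C (comp C a' f) = src C a" using category_tgt_comp[OF cat a'(1) f composable] a'(3) by simp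
    have "comp C a (comp C a' f) = comp C (comp C a a') f"
      using category_comp_assoc[OF cat a a'(1) f] a'(3) composable by simp
    also have "\<dots> = f" using a'(4) assms(4) category_comp_ident_left[OF cat f] by simp
    finally show "comp C a (comp C a' f) = f" .
  qed
qed

lemma groupoid_comp_cancel_left:
  assumes groupoid: "groupoid C" and a: "a \<in> Mor C" and b: "b \<in> Mor C" "b' \<in> Mor C"
    and "src C a = tgt C b" "src C a = tgt C b'" and "comp C a b = comp C a b'"
  shows "b = b'"
proof -
  have cat: "category C" using groupoid by (rule groupoid_category)
  obtain a' where a': "a' \<in> Mor C" "src C a' = tgt C a" "comp C a' a = ident C (src C a)"
    using groupoid a unfolding groupoid_def by blast
  have "b = comp C (comp C a' a) b"
    using a'(3) assms(5) category_comp_ident_left[OF cat b(1)] by simp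
  also have "\<dots> = comp C (comp C a' a) b'"
    using category_comp_assoc[OF cat a'(1) a] a'(2) b assms(5-7) by simp
  also have "\<dots> = b'"
    using a'(3) assms(6) category_comp_ident_left[OF cat b(2)] by simp
  finally show ?thesis .
qed

lemma groupoid_inj_on_fst_factorizations:
  assumes "groupoid C" "\<sigma> \<subseteq> Mor C" "\<tau> \<subseteq> Mor C"
  shows "inj_on fst (factorizations C \<sigma> \<tau> f)"
proof (rule inj_onI)
  fix p q assume p: "p \<in> factorizations C \<sigma> \<tau> f" and q: "q \<in> factorizations C \<sigma> \<tau> f"
    and "fst p = fst q"
  then obtain a b b' where "p = (a, b)" "q = (a, b')" by (metis prod.collapse)
  with p q show "p = q"
    using groupoid_comp_cancel_left[OF assms(1), of a b b'] assms(2,3)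
    unfolding factorizations_def by auto
qed

lemma finite_factorizations: "finite \<sigma> \<Longrightarrow> finite \<tau> \<Longrightarrow> finite (factorizations C \<sigma> \<tau> f)"
  by (rule finite_subset[of _ "\<sigma> \<times> \<tau>"]) (auto simp: factorizations_def)

definition block_of :: "'a set set \<Rightarrow> 'a \<Rightarrow> 'a set" where
  "block_of S f = (THE \<sigma>. \<sigma> \<in> S \<and> f \<in> \<sigma>)"

definition block_constant :: "('o, 'a) cat \<Rightarrow> 'a set set \<Rightarrow> ('a \<Rightarrow> 'k::zero) \<Rightarrow> bool" where
  "block_constant C S u \<longleftrightarrow>
     (\<forall>h. h \<notin> Mor C \<longrightarrow> u h = 0) \<and> (\<forall>\<sigma>\<in>S. \<forall>f\<in>\<sigma>. \<forall>g\<in>\<sigma>. u f = u g)"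

lemma block_constant_outside: "block_constant C S u \<Longrightarrow> h \<notin> Mor C \<Longrightarrow> u h = 0"
  unfolding block_constant_def by blast

lemma block_constant_eq:
  "block_constant C S u \<Longrightarrow> \<sigma> \<in> S \<Longrightarrow> f \<in> \<sigma> \<Longrightarrow> g \<in> \<sigma> \<Longrightarrow> u f = u g"
  unfolding block_constant_def by blast

context
  fixes C :: "('o, 'a) cat" and S :: "'a set set"
  assumes qs: "quasi_schemoid C S"
begin

lemma qs_category: "category C"
  using qs unfolding quasi_schemoid_def by (elim conjE)

lemma qs_block_subset: "\<sigma> \<in> S \<Longrightarrow> \<sigma> \<subseteq> Mor C"
  using qs unfolding quasi_schemoid_def by (elim conjE) blast

lemma qs_some_in_block: "\<sigma> \<in> S \<Longrightarrow> (SOME f. f \<in> \<sigma>) \<in> \<sigma>"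
  using qs some_in_eq unfolding quasi_schemoid_def by (elim conjE) blast

lemma qs_exists_block: "f \<in> Mor C \<Longrightarrow> \<exists>\<sigma>\<in>S. f \<in> \<sigma>"
proof -
  have "\<Union>S = Mor C" using qs unfolding quasi_schemoid_def by (elim conjE)
  then show "f \<in> Mor C \<Longrightarrow> \<exists>\<sigma>\<in>S. f \<in> \<sigma>" by blast
qed

lemma qs_block_eq: "\<sigma> \<in> S \<Longrightarrow> \<tau> \<in> S \<Longrightarrow> f \<in> \<sigma> \<Longrightarrow> f \<in> \<tau> \<Longrightarrow> \<sigma> = \<tau>"
  using qs unfolding quasi_schemoid_def by (elim conjE) blast

lemma qs_card_factorizations_eq:
  assumes "\<sigma> \<in> S" "\<tau> \<in> S" "\<mu> \<in> S" "f \<in> \<mu>" "g \<in> \<mu>"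
  shows "card (factorizations C \<sigma> \<tau> f) = card (factorizations C \<sigma> \<tau> g)"
proof -
  have "\<forall>\<sigma>\<in>S. \<forall>\<tau>\<in>S. \<forall>\<mu>\<in>S. \<forall>f\<in>\<mu>. \<forall>g\<in>\<mu>.
      card (factorizations C \<sigma> \<tau> f) = card (factorizations C \<sigma> \<tau> g)"
    using qs unfolding quasi_schemoid_def by (elim conjE)
  then show ?thesis using assms by blast
qed

lemma qs_finite_blocks: "finite (Mor C) \<Longrightarrow> finite S"
  by (rule finite_subset[of S "Pow (Mor C)"]) (use qs_block_subset in auto)

lemma qs_finite_block: "finite (Mor C) \<Longrightarrow> \<sigma> \<in> S \<Longrightarrow> finite \<sigma>"
  using finite_subset qs_block_subset by blast

lemma sblock_eq_within_block:
  "\<tau> \<in> S \<Longrightarrow> \<nu> \<in> S \<Longrightarrow> h \<in> \<nu> \<Longrightarrow> h' \<in> \<nu> \<Longrightarrow> sblock \<tau> h = sblock \<tau> h'"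
  unfolding sblock_def using qs_block_eq by metis

lemma block_of_eq: "\<sigma> \<in> S \<Longrightarrow> f \<in> \<sigma> \<Longrightarrow> block_of S f = \<sigma>"
  unfolding block_of_def by (rule the_equality) (auto dest: qs_block_eq)

lemma block_of_mem: "f \<in> Mor C \<Longrightarrow> block_of S f \<in> S"
  and mem_block_of: "f \<in> Mor C \<Longrightarrow> f \<in> block_of S f"
  using block_of_eq qs_exists_block by force+

lemma schemoid_alg_block_constant:
  assumes "finite S" and "u \<in> schemoid_alg S"
  shows "block_constant C S u"
proof -
  obtain c where u: "u = (\<lambda>h. \<Sum>\<sigma>\<in>S. c \<sigma> * sblock \<sigma> h)"
    using assms(2) unfolding schemoid_alg_def by blast
  have "u h = c \<sigma>" if "\<sigma> \<in> S" "h \<in> \<sigma>" for \<sigma> h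
  proof -
    have "u h = (\<Sum>\<tau>\<in>S. if \<tau> = \<sigma> then c \<tau> else 0)"
      unfolding u using that qs_block_eq by (intro sum.cong) (auto simp: sblock_def)
    then show ?thesis using assms(1) that by simp
  qed
  moreover have "u h = 0" if "h \<notin> Mor C" for h
    unfolding u using that qs_block_subset by (intro sum.neutral) (auto simp: sblock_def)
  ultimately show ?thesis unfolding block_constant_def by auto
qed

lemma cat_mult_block_expansion:
  assumes fin: "finite (Mor C)" and u: "block_constant C S u" and v: "block_constant C S v"
  shows "cat_mult C u v h = (\<Sum>(\<sigma>, \<tau>)\<in>S \<times> S.
    of_nat (card (factorizations C \<sigma> \<tau> h)) * (u (SOME f. f \<in> \<sigma>) * v (SOME f. f \<in> \<tau>)))"
proof -
  let ?F = "factorizations C (Mor C) (Mor C) h"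
  let ?blocks = "\<lambda>(a, b). (block_of S a, block_of S b)"
  have "cat_mult C u v h = (\<Sum>q\<in>S \<times> S. \<Sum>(a, b)\<in>{p \<in> ?F. ?blocks p = q}. u a * v b)"
    unfolding cat_mult_def
    by (rule sum.group[symmetric])
      (use finite_factorizations fin qs_finite_blocks block_of_mem in \<open>auto simp: factorizations_def\<close>)
  also have "\<dots> = (\<Sum>(\<sigma>, \<tau>)\<in>S \<times> S.
      of_nat (card (factorizations C \<sigma> \<tau> h)) * (u (SOME f. f \<in> \<sigma>) * v (SOME f. f \<in> \<tau>)))"
  proof (rule sum.cong[OF refl], clarify)
    fix \<sigma> \<tau> assume \<sigma>: "\<sigma> \<in> S" and \<tau>: "\<tau> \<in> S"
    have "{p \<in> ?F. ?blocks p = (\<sigma>, \<tau>)} = factorizations C \<sigma> \<tau> h" (is "?L = ?R")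
    proof
      show "?L \<subseteq> ?R" using mem_block_of unfolding factorizations_def by fastforce
      show "?R \<subseteq> ?L"
        using qs_block_subset[OF \<sigma>] qs_block_subset[OF \<tau>] block_of_eq[OF \<sigma>] block_of_eq[OF \<tau>]
        unfolding factorizations_def by auto
    qed
    moreover have "u a * v b = u (SOME f. f \<in> \<sigma>) * v (SOME f. f \<in> \<tau>)"
      if "(a, b) \<in> factorizations C \<sigma> \<tau> h" for a b
      using that block_constant_eq[OF u \<sigma> _ qs_some_in_block[OF \<sigma>], of a]
        block_constant_eq[OF v \<tau> _ qs_some_in_block[OF \<tau>], of b]
      unfolding factorizations_def by simp
    ultimately show "(\<Sum>(a, b)\<in>{p \<in> ?F. ?blocks p = (\<sigma>, \<tau>)}. u a * v b) =
      of_nat (card (factorizations C \<sigma> \<tau> h)) * (u (SOME f. f \<in> \<sigma>) * v (SOME f. f \<in> \<tau>))"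
      by (simp add: case_prod_beta)
  qed
  finally show ?thesis .
qed

lemma block_constant_cat_mult:
  assumes fin: "finite (Mor C)" and u: "block_constant C S u" and v: "block_constant C S v"
  shows "block_constant C S (cat_mult C u v)"
proof -
  have "cat_mult C u v h = 0" if "h \<notin> Mor C" for h
  proof -
    have "factorizations C (Mor C) (Mor C) h = {}"
      using that category_comp_mem[OF qs_category] unfolding factorizations_def by blast
    then show ?thesis by (simp add: cat_mult_def)
  qed
  moreover have "cat_mult C u v f = cat_mult C u v g" if "\<mu> \<in> S" "f \<in> \<mu>" "g \<in> \<mu>" for \<mu> f g
    unfolding cat_mult_block_expansion[OF assms]
    using qs_card_factorizations_eq[OF _ _ that] by (intro sum.cong) auto
  ultimately show ?thesis unfolding block_constant_def by blast
qed

end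

lemma qs_groupoid_block_targets:
  assumes qs: "quasi_schemoid D T" and groupoid: "groupoid D" and fin: "finite (Mor D)"
    and \<nu>: "\<nu> \<in> T" "g \<in> \<nu>" and \<mu>: "\<mu> \<in> T" "a \<in> \<mu>" "c \<in> \<mu>" and "tgt D g = tgt D a"
  obtains g' where "g' \<in> \<nu>" "tgt D g' = tgt D c"
proof -
  have cat: "category D" by (rule qs_category[OF qs])
  have g: "g \<in> Mor D" and a: "a \<in> Mor D" using qs_block_subset[OF qs] \<nu> \<mu> by blast+
  obtain r where r: "r \<in> Mor D" "tgt D r = src D g" "comp D g r = a"
    using groupoid_factor_through[OF groupoid g a] assms(9) by blast
  let ?\<rho> = "block_of T r"
  have \<rho>: "?\<rho> \<in> T" "r \<in> ?\<rho>" using block_of_mem[OF qs r(1)] mem_block_of[OF qs r(1)] .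
  have "finite \<nu>" "finite ?\<rho>" using qs_finite_block[OF qs fin] \<nu>(1) \<rho>(1) by auto
  then have finite: "finite (factorizations D \<nu> ?\<rho> h)" for h by (rule finite_factorizations)
  \<comment> \<open>(g, r) shows the structure constant for \<nu>, \<rho> at the block of a is nonzero, so c factors too\<close>
  have "(g, r) \<in> factorizations D \<nu> ?\<rho> a" unfolding factorizations_def using \<nu> \<rho> r by simp
  then have "card (factorizations D \<nu> ?\<rho> a) \<noteq> 0" using finite by auto
  then have "card (factorizations D \<nu> ?\<rho> c) \<noteq> 0"
    using qs_card_factorizations_eq[OF qs \<nu>(1) \<rho>(1) \<mu>] by simp
  then obtain g' r' where "(g', r') \<in> factorizations D \<nu> ?\<rho> c"
    by (metis card.empty ex_in_conv surj_pair)
  then have g': "g' \<in> \<nu>" "r' \<in> ?\<rho>" "src D g' = tgt D r'" "comp D g' r' = c"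
    unfolding factorizations_def by auto
  have "tgt D c = tgt D g'"
    using category_tgt_comp[OF cat _ _ g'(3)] g' qs_block_subset[OF qs] \<nu>(1) \<rho>(1) by blast
  with g'(1) show thesis using that by simp
qed

locale admissible_into_basic =
  fixes C :: "('o, 'a) cat" and S :: "'a set set"
    and D :: "('p, 'b) cat" and T :: "'b set set"
    and po :: "'o \<Rightarrow> 'p" and pm :: "'a \<Rightarrow> 'b"
  assumes finite_D: "finite_qs D T" and basic_D: "basic_qs D T"
    and finite_C: "finite_qs C S" and groupoid_C: "groupoid C"
    and admissible: "admissible C S D T po pm"
begin

lemma qs_C: "quasi_schemoid C S"
  using finite_C unfolding finite_qs_def by (elim conjE)

lemma qs_D: "quasi_schemoid D T"
  using finite_D unfolding finite_qs_def by (elim conjE)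

lemma finite_Mor_C: "finite (Mor C)"
  using finite_C unfolding finite_qs_def by (elim conjE)

lemma finite_Mor_D: "finite (Mor D)"
  using finite_D unfolding finite_qs_def by (elim conjE)

lemma groupoid_D: "groupoid D"
  using basic_D unfolding basic_qs_def by (elim conjE)

lemma category_C: "category C"
  by (rule qs_category[OF qs_C])

lemma category_D: "category D"
  by (rule qs_category[OF qs_D])

lemma finite_S: "finite S"
  by (rule qs_finite_blocks[OF qs_C finite_Mor_C])

lemma unital_D: "\<tau> \<in> T \<Longrightarrow> \<tau> \<inter> ident D ` Ob D \<noteq> {} \<Longrightarrow> \<tau> \<subseteq> ident D ` Ob D"
  using basic_D unfolding basic_qs_def unital_qs_def by (elim conjE) blast

lemma morphism: "qs_morphism C S D T po pm"
  using admissible unfolding admissible_def by (elim conjE)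

lemma pm_mem: "f \<in> Mor C \<Longrightarrow> pm f \<in> Mor D"
  and pm_src: "f \<in> Mor C \<Longrightarrow> src D (pm f) = po (src C f)"
  and pm_tgt: "f \<in> Mor C \<Longrightarrow> tgt D (pm f) = po (tgt C f)"
  using morphism unfolding qs_morphism_def by (elim conjE; blast)+

lemma pm_comp:
  "f \<in> Mor C \<Longrightarrow> g \<in> Mor C \<Longrightarrow> src C f = tgt C g \<Longrightarrow> pm (comp C f g) = comp D (pm f) (pm g)"
  using morphism unfolding qs_morphism_def by (elim conjE) blast

lemma pm_block: "\<sigma> \<in> S \<Longrightarrow> \<exists>\<tau>\<in>T. pm ` \<sigma> \<subseteq> \<tau>"
  using morphism unfolding qs_morphism_def by (elim conjE) blast

lemma admissible_lift:
  "x \<in> Ob C \<Longrightarrow> \<sigma> \<in> S \<Longrightarrow> g \<in> img_block T pm \<sigma> \<Longrightarrow> tgt D g = po x \<Longrightarrow>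
    \<exists>f\<in>\<sigma>. tgt C f = x \<and> pm f = g"
  using admissible unfolding admissible_def by (elim conjE) blast

lemma img_block_mem: "\<sigma> \<in> S \<Longrightarrow> img_block T pm \<sigma> \<in> T"
  and image_subset_img_block: "\<sigma> \<in> S \<Longrightarrow> pm ` \<sigma> \<subseteq> img_block T pm \<sigma>"
proof -
  assume \<sigma>: "\<sigma> \<in> S"
  obtain \<tau> where \<tau>: "\<tau> \<in> T" "pm ` \<sigma> \<subseteq> \<tau>" using pm_block[OF \<sigma>] by blast
  have some: "pm (SOME f. f \<in> \<sigma>) \<in> pm ` \<sigma>" using qs_some_in_block[OF qs_C \<sigma>] by blast
  have "img_block T pm \<sigma> = \<tau>"
    unfolding img_block_def using \<tau> some qs_block_eq[OF qs_D] by (intro the_equality) blast+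
  with \<tau> show "img_block T pm \<sigma> \<in> T" "pm ` \<sigma> \<subseteq> img_block T pm \<sigma>" by simp_all
qed

definition ker :: "'a set" where
  "ker = {k \<in> Mor C. pm k \<in> ident D ` Ob D}"

lemma ker_subset: "ker \<subseteq> Mor C"
  unfolding ker_def by blast

lemma ker_eq_Union_blocks: "ker = \<Union>{\<rho> \<in> S. \<rho> \<subseteq> ker}"
proof
  show "ker \<subseteq> \<Union>{\<rho> \<in> S. \<rho> \<subseteq> ker}"
  proof
    fix k assume k: "k \<in> ker"
    then have k_mor: "k \<in> Mor C" unfolding ker_def by blast
    let ?\<rho> = "block_of S k"
    have \<rho>: "?\<rho> \<in> S" "k \<in> ?\<rho>" using block_of_mem[OF qs_C k_mor] mem_block_of[OF qs_C k_mor] .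
    have "pm k \<in> img_block T pm ?\<rho> \<inter> ident D ` Ob D"
      using image_subset_img_block[OF \<rho>(1)] \<rho>(2) k unfolding ker_def by blast
    then have "img_block T pm ?\<rho> \<subseteq> ident D ` Ob D"
      using unital_D[OF img_block_mem[OF \<rho>(1)]] by blast
    then have "?\<rho> \<subseteq> ker"
      using image_subset_img_block[OF \<rho>(1)] qs_block_subset[OF qs_C \<rho>(1)] unfolding ker_def by blast
    with \<rho> show "k \<in> \<Union>{\<rho> \<in> S. \<rho> \<subseteq> ker}" by blast
  qed
qed blast

lemma card_factorizations_ker:
  assumes \<pi>: "\<pi> \<in> S"
  shows "card (factorizations C \<pi> ker f) = (\<Sum>\<rho>\<in>{\<rho> \<in> S. \<rho> \<subseteq> ker}. card (factorizations C \<pi> \<rho> f))"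
proof -
  have "factorizations C \<pi> ker f = (\<Union>\<rho>\<in>{\<rho> \<in> S. \<rho> \<subseteq> ker}. factorizations C \<pi> \<rho> f)"
  proof -
    have "b \<in> ker \<longleftrightarrow> (\<exists>\<rho>\<in>{\<rho> \<in> S. \<rho> \<subseteq> ker}. b \<in> \<rho>)" for b
      by (subst ker_eq_Union_blocks) blast
    then show ?thesis unfolding factorizations_def by blast
  qed
  moreover have "card (\<Union>\<rho>\<in>{\<rho> \<in> S. \<rho> \<subseteq> ker}. factorizations C \<pi> \<rho> f)
      = (\<Sum>\<rho>\<in>{\<rho> \<in> S. \<rho> \<subseteq> ker}. card (factorizations C \<pi> \<rho> f))"
  proof (rule card_UN_disjoint)
    show "finite {\<rho> \<in> S. \<rho> \<subseteq> ker}" using finite_S by simp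
    show "\<forall>\<rho>\<in>{\<rho> \<in> S. \<rho> \<subseteq> ker}. finite (factorizations C \<pi> \<rho> f)"
      using qs_finite_block[OF qs_C finite_Mor_C] \<pi> by (auto intro: finite_factorizations)
    show "\<forall>\<rho>\<in>{\<rho> \<in> S. \<rho> \<subseteq> ker}. \<forall>\<rho>'\<in>{\<rho> \<in> S. \<rho> \<subseteq> ker}. \<rho> \<noteq> \<rho>' \<longrightarrow>
        factorizations C \<pi> \<rho> f \<inter> factorizations C \<pi> \<rho>' f = {}"
      by (auto simp: factorizations_def dest: qs_block_eq[OF qs_C])
  qed
  ultimately show ?thesis by simp
qed

lemma fst_factorizations_ker:
  assumes \<pi>: "\<pi> \<in> S" and f: "f \<in> \<pi>"
  shows "fst ` factorizations C \<pi> ker f = {f' \<in> \<pi>. tgt C f' = tgt C f \<and> pm f' = pm f}"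
proof (intro set_eqI iffI)
  fix f' assume "f' \<in> fst ` factorizations C \<pi> ker f"
  then obtain k where "(f', k) \<in> factorizations C \<pi> ker f" by force
  then have f': "f' \<in> \<pi>" "f' \<in> Mor C" and k: "k \<in> Mor C" "pm k \<in> ident D ` Ob D"
    and c: "src C f' = tgt C k" and f'k: "comp C f' k = f"
    using qs_block_subset[OF qs_C \<pi>] unfolding factorizations_def ker_def by auto
  obtain z where z: "z \<in> Ob D" "pm k = ident D z" using k(2) by blast
  have "z = src D (pm f')"
    using pm_tgt[OF k(1)] pm_src[OF f'(2)] c z category_tgt_ident[OF category_D z(1)] by simp
  then have "pm f = pm f'"
    using f'k pm_comp[OF f'(2) k(1) c] z(2) category_comp_ident_right[OF category_D pm_mem[OF f'(2)]]
    by simp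
  moreover have "tgt C f = tgt C f'" using f'k category_tgt_comp[OF category_C f'(2) k(1) c] by simp
  ultimately show "f' \<in> {f' \<in> \<pi>. tgt C f' = tgt C f \<and> pm f' = pm f}" using f' by simp
next
  fix f' assume "f' \<in> {f' \<in> \<pi>. tgt C f' = tgt C f \<and> pm f' = pm f}"
  then have f': "f' \<in> \<pi>" "f' \<in> Mor C" "tgt C f' = tgt C f" "pm f' = pm f"
    using qs_block_subset[OF qs_C \<pi>] by auto
  have f_mor: "f \<in> Mor C" using qs_block_subset[OF qs_C \<pi>] f by blast
  obtain k where k: "k \<in> Mor C" "tgt C k = src C f'" "comp C f' k = f"
    using groupoid_factor_through[OF groupoid_C f'(2) f_mor f'(3)] by blast
  let ?e = "ident D (src D (pm f'))"
  have e: "?e \<in> Mor D" "tgt D ?e = src D (pm f')"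
    using category_src_mem[OF category_D pm_mem[OF f'(2)]] category_ident_mem[OF category_D]
      category_tgt_ident[OF category_D] by blast+
  have "comp D (pm f') (pm k) = comp D (pm f') ?e"
    using pm_comp[OF f'(2) k(1) k(2)[symmetric]] k(3) f'(4)
      category_comp_ident_right[OF category_D pm_mem[OF f'(2)]] by simp
  then have "pm k = ?e"
    using groupoid_comp_cancel_left[OF groupoid_D pm_mem[OF f'(2)] pm_mem[OF k(1)] e(1)]
      pm_src[OF f'(2)] pm_tgt[OF k(1)] k(2) e(2) by simp
  then have "k \<in> ker"
    unfolding ker_def using k(1) category_src_mem[OF category_D pm_mem[OF f'(2)]] by blast
  then have "(f', k) \<in> factorizations C \<pi> ker f" using f' k unfolding factorizations_def by simp
  then show "f' \<in> fst ` factorizations C \<pi> ker f" by force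
qed

lemma card_fiber_eq_card_factorizations_ker:
  assumes \<pi>: "\<pi> \<in> S" and f: "f \<in> \<pi>"
  shows "card {f' \<in> \<pi>. tgt C f' = tgt C f \<and> pm f' = pm f} = card (factorizations C \<pi> ker f)"
proof -
  have "inj_on fst (factorizations C \<pi> ker f)"
    by (rule groupoid_inj_on_fst_factorizations[OF groupoid_C qs_block_subset[OF qs_C \<pi>] ker_subset])
  from card_image[OF this] show ?thesis by (simp add: fst_factorizations_ker[OF \<pi> f])
qed

lemma card_fiber_eq_nphi:
  assumes \<pi>: "\<pi> \<in> S" and x: "x \<in> Ob C" and g: "g \<in> img_block T pm \<pi>" "tgt D g = po x"
  shows "card {f \<in> \<pi>. tgt C f = x \<and> pm f = g} = nphi C pm \<pi>"
proof -
  obtain f where f: "f \<in> \<pi>" "tgt C f = x" "pm f = g" using admissible_lift[OF x \<pi> g] by blast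
  let ?f0 = "SOME f. f \<in> \<pi>"
  have f0: "?f0 \<in> \<pi>" by (rule qs_some_in_block[OF qs_C \<pi>])
  have "card {f' \<in> \<pi>. tgt C f' = tgt C f \<and> pm f' = pm f}
      = card {f' \<in> \<pi>. tgt C f' = tgt C ?f0 \<and> pm f' = pm ?f0}"
    unfolding card_fiber_eq_card_factorizations_ker[OF \<pi> f(1)]
      card_fiber_eq_card_factorizations_ker[OF \<pi> f0] card_factorizations_ker[OF \<pi>]
    using qs_card_factorizations_eq[OF qs_C \<pi> _ \<pi> f(1) f0] by (intro sum.cong) auto
  then show ?thesis using f unfolding nphi_def Let_def by simp
qed

lemma sum_fiber_eq_Kphi:
  assumes u: "block_constant C S u" and x: "x \<in> Ob C" and g: "tgt D g = po x"
  shows "(\<Sum>f\<in>{f \<in> Mor C. tgt C f = x \<and> pm f = g}. u f) = Kphi C S T pm u g"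
proof -
  let ?M = "{f \<in> Mor C. tgt C f = x \<and> pm f = g}"
  have "(\<Sum>f\<in>?M. u f) = (\<Sum>\<pi>\<in>S. \<Sum>f\<in>{f \<in> ?M. block_of S f = \<pi>}. u f)"
    by (rule sum.group[symmetric]) (use finite_Mor_C finite_S block_of_mem[OF qs_C] in auto)
  also have "\<dots> = Kphi C S T pm u g"
    unfolding Kphi_def
  proof (rule sum.cong[OF refl])
    fix \<pi> assume \<pi>: "\<pi> \<in> S"
    let ?f0 = "SOME f. f \<in> \<pi>"
    let ?fiber = "{f \<in> \<pi>. tgt C f = x \<and> pm f = g}"
    have card_fiber: "of_nat (card ?fiber) = of_nat (nphi C pm \<pi>) * sblock (img_block T pm \<pi>) g"
    proof (cases "g \<in> img_block T pm \<pi>")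
      case True
      then show ?thesis using card_fiber_eq_nphi[OF \<pi> x True g] by (simp add: sblock_def)
    next
      case False
      then have empty: "?fiber = {}" using image_subset_img_block[OF \<pi>] by blast
      show ?thesis unfolding empty using False by (simp add: sblock_def)
    qed
    have "{f \<in> ?M. block_of S f = \<pi>} = ?fiber"
      using qs_block_subset[OF qs_C \<pi>] block_of_eq[OF qs_C \<pi>] mem_block_of[OF qs_C] by blast
    then have "(\<Sum>f\<in>{f \<in> ?M. block_of S f = \<pi>}. u f) = (\<Sum>f\<in>?fiber. u ?f0)"
      using block_constant_eq[OF u \<pi> _ qs_some_in_block[OF qs_C \<pi>]] by simp
    also have "\<dots> = of_nat (card ?fiber) * u ?f0" by simp
    also have "\<dots> = u ?f0 * of_nat (nphi C pm \<pi>) * sblock (img_block T pm \<pi>) g"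
      unfolding card_fiber by (simp add: mult_ac)
    finally show "(\<Sum>f\<in>{f \<in> ?M. block_of S f = \<pi>}. u f)
        = u ?f0 * of_nat (nphi C pm \<pi>) * sblock (img_block T pm \<pi>) g" .
  qed
  finally show ?thesis .
qed

lemma block_constant_Kphi: "block_constant D T (Kphi C S T pm u)"
proof -
  have "Kphi C S T pm u h = 0" if "h \<notin> Mor D" for h
    unfolding Kphi_def using qs_block_subset[OF qs_D img_block_mem] that
    by (intro sum.neutral) (auto simp: sblock_def)
  moreover have "Kphi C S T pm u h = Kphi C S T pm u h'" if "\<nu> \<in> T" "h \<in> \<nu>" "h' \<in> \<nu>" for \<nu> h h'
    unfolding Kphi_def
    by (rule sum.cong[OF refl]) (simp add: sblock_eq_within_block[OF qs_D img_block_mem that])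
  ultimately show ?thesis unfolding block_constant_def by blast
qed

definition composable_pairs_over :: "'o \<Rightarrow> 'b \<Rightarrow> ('a \<times> 'a) set" where
  "composable_pairs_over x g = {(a, b). a \<in> Mor C \<and> b \<in> Mor C \<and> src C a = tgt C b \<and>
     tgt C a = x \<and> pm (comp C a b) = g}"

lemma finite_composable_pairs_over: "finite (composable_pairs_over x g)"
  by (rule finite_subset[of _ "Mor C \<times> Mor C"]) (auto simp: composable_pairs_over_def finite_Mor_C)

lemma sum_composable_pairs_over_eq_Kphi_cat_mult:
  assumes u: "block_constant C S u" and v: "block_constant C S v"
    and x: "x \<in> Ob C" and g: "tgt D g = po x"
  shows "(\<Sum>(a, b)\<in>composable_pairs_over x g. u a * v b) = Kphi C S T pm (cat_mult C u v) g"
proof -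
  let ?H = "{h \<in> Mor C. tgt C h = x \<and> pm h = g}"
  let ?comp = "\<lambda>(a, b). comp C a b"
  have "(\<Sum>(a, b)\<in>composable_pairs_over x g. u a * v b)
      = (\<Sum>h\<in>?H. \<Sum>(a, b)\<in>{p \<in> composable_pairs_over x g. ?comp p = h}. u a * v b)"
    by (rule sum.group[symmetric])
      (use finite_composable_pairs_over finite_Mor_C category_comp_mem[OF category_C]
        category_tgt_comp[OF category_C] in \<open>auto simp: composable_pairs_over_def\<close>)
  also have "\<dots> = (\<Sum>h\<in>?H. cat_mult C u v h)"
  proof (rule sum.cong[OF refl])
    fix h assume h: "h \<in> ?H"
    have "{p \<in> composable_pairs_over x g. ?comp p = h} = factorizations C (Mor C) (Mor C) h"
      using h category_tgt_comp[OF category_C]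
      unfolding composable_pairs_over_def factorizations_def by auto
    then show "(\<Sum>(a, b)\<in>{p \<in> composable_pairs_over x g. ?comp p = h}. u a * v b) = cat_mult C u v h"
      by (simp add: cat_mult_def)
  qed
  also have "\<dots> = Kphi C S T pm (cat_mult C u v) g"
    by (rule sum_fiber_eq_Kphi[OF block_constant_cat_mult[OF qs_C finite_Mor_C u v] x g])
  finally show ?thesis .
qed

lemma composable_pairs_over_fiber:
  assumes "comp D a' b' = g"
  shows "{p \<in> composable_pairs_over x g. map_prod pm pm p = (a', b')}
    = (SIGMA a:{a \<in> Mor C. tgt C a = x \<and> pm a = a'}. {b \<in> Mor C. tgt C b = src C a \<and> pm b = b'})"
  using assms pm_comp unfolding composable_pairs_over_def by auto

lemma sum_composable_pairs_over_eq_cat_mult_Kphi: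
  assumes u: "block_constant C S u" and v: "block_constant C S v"
    and x: "x \<in> Ob C" and g: "tgt D g = po x"
  shows "(\<Sum>(a, b)\<in>composable_pairs_over x g. u a * v b)
    = cat_mult D (Kphi C S T pm u) (Kphi C S T pm v) g"
proof -
  let ?Q = "factorizations D (Mor D) (Mor D) g"
  have "(\<Sum>(a, b)\<in>composable_pairs_over x g. u a * v b)
      = (\<Sum>q\<in>?Q. \<Sum>(a, b)\<in>{p \<in> composable_pairs_over x g. map_prod pm pm p = q}. u a * v b)"
    by (rule sum.group[symmetric])
      (use finite_composable_pairs_over finite_factorizations finite_Mor_D pm_mem pm_src pm_tgt pm_comp
        in \<open>auto simp: composable_pairs_over_def factorizations_def\<close>)
  also have "\<dots> = (\<Sum>(a', b')\<in>?Q. Kphi C S T pm u a' * Kphi C S T pm v b')"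
  proof (rule sum.cong[OF refl], clarify)
    fix a' b' assume "(a', b') \<in> ?Q"
    then have a'b': "a' \<in> Mor D" "b' \<in> Mor D" "src D a' = tgt D b'" "comp D a' b' = g"
      unfolding factorizations_def by auto
    have a'_tgt: "tgt D a' = po x" using category_tgt_comp[OF category_D a'b'(1-3)] a'b'(4) g by simp
    let ?A = "{a \<in> Mor C. tgt C a = x \<and> pm a = a'}"
    have "(\<Sum>(a, b)\<in>{p \<in> composable_pairs_over x g. map_prod pm pm p = (a', b')}. u a * v b)
        = (\<Sum>a\<in>?A. \<Sum>b\<in>{b \<in> Mor C. tgt C b = src C a \<and> pm b = b'}. u a * v b)"
      unfolding composable_pairs_over_fiber[OF a'b'(4)] by (rule sum.Sigma[symmetric]) (auto simp: finite_Mor_C)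
    also have "\<dots> = (\<Sum>a\<in>?A. u a * Kphi C S T pm v b')"
    proof (rule sum.cong[OF refl])
      fix a assume a: "a \<in> ?A"
      then have a_mor: "a \<in> Mor C" by blast
      have "tgt D b' = po (src C a)" using a'b'(3) pm_src a by auto
      from sum_fiber_eq_Kphi[OF v category_src_mem[OF category_C a_mor] this]
      show "(\<Sum>b\<in>{b \<in> Mor C. tgt C b = src C a \<and> pm b = b'}. u a * v b) = u a * Kphi C S T pm v b'"
        by (simp only: sum_distrib_left[symmetric])
    qed
    also have "\<dots> = Kphi C S T pm u a' * Kphi C S T pm v b'"
      using sum_fiber_eq_Kphi[OF u x a'_tgt] by (simp only: sum_distrib_right[symmetric])
    finally show "(\<Sum>(a, b)\<in>{p \<in> composable_pairs_over x g. map_prod pm pm p = (a', b')}. u a * v b)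
        = Kphi C S T pm u a' * Kphi C S T pm v b'" .
  qed
  also have "\<dots> = cat_mult D (Kphi C S T pm u) (Kphi C S T pm v) g"
    by (simp add: cat_mult_def)
  finally show ?thesis .
qed

lemma Kphi_eq_zero:
  assumes "\<forall>g'\<in>block_of T g. tgt D g' \<notin> po ` Ob C"
  shows "Kphi C S T pm u g = 0"
  unfolding Kphi_def
proof (rule sum.neutral, rule ballI)
  fix \<pi> assume \<pi>: "\<pi> \<in> S"
  let ?f0 = "SOME f. f \<in> \<pi>"
  have f0: "?f0 \<in> \<pi>" "?f0 \<in> Mor C" using qs_some_in_block[OF qs_C \<pi>] qs_block_subset[OF qs_C \<pi>] by blast+
  have "g \<notin> img_block T pm \<pi>"
  proof
    assume "g \<in> img_block T pm \<pi>"
    then have "pm ?f0 \<in> block_of T g"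
      using block_of_eq[OF qs_D img_block_mem[OF \<pi>]] image_subset_img_block[OF \<pi>] f0(1) by blast
    moreover have "tgt D (pm ?f0) \<in> po ` Ob C"
      using pm_tgt[OF f0(2)] category_tgt_mem[OF category_C f0(2)] by simp
    ultimately show False using assms by blast
  qed
  then show "u ?f0 * of_nat (nphi C pm \<pi>) * sblock (img_block T pm \<pi>) g = 0"
    by (simp add: sblock_def)
qed

lemma cat_mult_Kphi_eq_zero:
  assumes g: "g \<in> Mor D" and unlifted: "\<forall>g'\<in>block_of T g. tgt D g' \<notin> po ` Ob C"
  shows "cat_mult D (Kphi C S T pm u) (Kphi C S T pm v) g = 0"
  unfolding cat_mult_def
proof (rule sum.neutral, clarify)
  fix a' b' assume "(a', b') \<in> factorizations D (Mor D) (Mor D) g"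
  then have a': "a' \<in> Mor D" and "tgt D g = tgt D a'"
    using category_tgt_comp[OF category_D] unfolding factorizations_def by auto
  have "\<forall>c\<in>block_of T a'. tgt D c \<notin> po ` Ob C"
  proof (intro ballI notI)
    fix c assume "c \<in> block_of T a'" and c_lifted: "tgt D c \<in> po ` Ob C"
    then obtain g' where "g' \<in> block_of T g" "tgt D g' = tgt D c"
      using qs_groupoid_block_targets[OF qs_D groupoid_D finite_Mor_D
          block_of_mem[OF qs_D g] mem_block_of[OF qs_D g]
          block_of_mem[OF qs_D a'] mem_block_of[OF qs_D a'] _ \<open>tgt D g = tgt D a'\<close>]
      by blast
    with c_lifted unlifted show False by auto
  qed
  then show "Kphi C S T pm u a' * Kphi C S T pm v b' = 0" by (simp add: Kphi_eq_zero)
qed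

lemma Kphi_cat_mult:
  assumes u: "block_constant C S u" and v: "block_constant C S v"
  shows "Kphi C S T pm (cat_mult C u v) = cat_mult D (Kphi C S T pm u) (Kphi C S T pm v)"
proof
  fix g
  let ?L = "Kphi C S T pm (cat_mult C u v)"
  let ?R = "cat_mult D (Kphi C S T pm u) (Kphi C S T pm v)"
  have L: "block_constant D T ?L" by (rule block_constant_Kphi)
  have R: "block_constant D T ?R"
    by (rule block_constant_cat_mult[OF qs_D finite_Mor_D block_constant_Kphi block_constant_Kphi])
  show "?L g = ?R g"
  proof (cases "g \<in> Mor D")
    case False
    then show ?thesis using block_constant_outside[OF L] block_constant_outside[OF R] by simp
  next
    case True
    let ?\<nu> = "block_of T g"
    have \<nu>: "?\<nu> \<in> T" "g \<in> ?\<nu>" using block_of_mem[OF qs_D True] mem_block_of[OF qs_D True] .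
    show ?thesis
    proof (cases "\<exists>g'\<in>?\<nu>. tgt D g' \<in> po ` Ob C")
      case True
      then obtain g' x where g': "g' \<in> ?\<nu>" "x \<in> Ob C" "tgt D g' = po x" by blast
      have "?L g = ?L g'" by (rule block_constant_eq[OF L \<nu> g'(1)])
      also have "\<dots> = ?R g'"
        using sum_composable_pairs_over_eq_Kphi_cat_mult[OF u v g'(2,3)]
          sum_composable_pairs_over_eq_cat_mult_Kphi[OF u v g'(2,3)] by simp
      also have "\<dots> = ?R g" by (rule block_constant_eq[OF R \<nu>(1) g'(1) \<nu>(2)])
      finally show ?thesis .
    next
      case False
      then have "?L g = 0" by (intro Kphi_eq_zero) blast
      moreover have "?R g = 0" using cat_mult_Kphi_eq_zero[OF True] False by blast
      ultimately show ?thesis by simp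
    qed
  qed
qed

end

theorem proposition6p7:
  fixes C :: "('o, 'a) cat" and S :: "'a set set"
    and D :: "('p, 'b) cat" and T :: "'b set set"
    and po :: "'o \<Rightarrow> 'p" and pm :: "'a \<Rightarrow> 'b"
  assumes "finite_qs D T" and "basic_qs D T"
    and "finite_qs C S" and "groupoid C"
    and "admissible C S D T po pm"
  shows "\<forall>u\<in>(schemoid_alg S :: ('a \<Rightarrow> 'k::comm_ring_1) set). \<forall>v\<in>schemoid_alg S.
           Kphi C S T pm (cat_mult C u v) = cat_mult D (Kphi C S T pm u) (Kphi C S T pm v)"
proof -
  interpret admissible_into_basic C S D T po pm
    using assms by unfold_locales
  show ?thesis
    using Kphi_cat_mult schemoid_alg_block_constant[OF qs_C finite_S] by blast
qed

end
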